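(* Let \(s\ge 0\) be an integer and let \(G\) be a graph with \(\mathrm{surplus}(G)\geq s\). Then deleting any subset of \(s\) vertices from \(G\) results in a graph \(G'\) such that \(LP(G')=LP(G)-\frac{s}{2}\).
   Context: All graphs are finite, undirected and simple. For \(X\subseteq V(G)\), \(N(X)\) is the set of vertices not in \(X\) adjacent to some vertex of \(X\). The surplus of an independent set \(X\) is \(\mathrm{surplus}(X)=|N(X)|-|X|\); the surplus \(\mathrm{surplus}(G)\) of a graph is the minimum surplus over all nonempty independent sets of \(G\). \(LP(G)\) is the optimum value of the linear program: minimize \(\sum_{v\in V(G)}x_v\) subject to \(x_u+x_v\ge 1\) for every edge \(\{u,v\}\in E(G)\) and \(0\le x_v\le 1\) for every \(v\in V(G)\). *)

theory Defs
  imports Main "HOL.Real"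
begin

definition graph :: "'a set \<Rightarrow> ('a \<Rightarrow> 'a \<Rightarrow> bool) \<Rightarrow> bool" where
  "graph V E \<longleftrightarrow> finite V \<and> (\<forall>u v. E u v \<longrightarrow> E v u) \<and> (\<forall>v. \<not> E v v)
      \<and> (\<forall>u v. E u v \<longrightarrow> u \<in> V \<and> v \<in> V)"

definition induced :: "('a \<Rightarrow> 'a \<Rightarrow> bool) \<Rightarrow> 'a set \<Rightarrow> 'a \<Rightarrow> 'a \<Rightarrow> bool" where
  "induced E W = (\<lambda>u v. E u v \<and> u \<in> W \<and> v \<in> W)"

definition independent :: "'a set \<Rightarrow> ('a \<Rightarrow> 'a \<Rightarrow> bool) \<Rightarrow> 'a set \<Rightarrow> bool" where
  "independent V E X \<longleftrightarrow> X \<subseteq> V \<and> (\<forall>u\<in>X. \<forall>v\<in>X. \<not> E u v)"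

definition nbhd :: "'a set \<Rightarrow> ('a \<Rightarrow> 'a \<Rightarrow> bool) \<Rightarrow> 'a set \<Rightarrow> 'a set" where
  "nbhd V E X = {v \<in> V - X. \<exists>u\<in>X. E u v}"

definition surplus_set :: "'a set \<Rightarrow> ('a \<Rightarrow> 'a \<Rightarrow> bool) \<Rightarrow> 'a set \<Rightarrow> int" where
  "surplus_set V E X = int (card (nbhd V E X)) - int (card X)"

definition surplus :: "'a set \<Rightarrow> ('a \<Rightarrow> 'a \<Rightarrow> bool) \<Rightarrow> int" where
  "surplus V E = Min {surplus_set V E X | X. X \<noteq> {} \<and> independent V E X}"

definition lp_feasible :: "'a set \<Rightarrow> ('a \<Rightarrow> 'a \<Rightarrow> bool) \<Rightarrow> ('a \<Rightarrow> real) \<Rightarrow> bool" where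
  "lp_feasible V E x \<longleftrightarrow> (\<forall>v\<in>V. 0 \<le> x v \<and> x v \<le> 1)
      \<and> (\<forall>u\<in>V. \<forall>v\<in>V. E u v \<longrightarrow> x u + x v \<ge> 1)"

text \<open>Optimum value of the fractional vertex cover LP (a minimum, which is attained).\<close>
definition LP :: "'a set \<Rightarrow> ('a \<Rightarrow> 'a \<Rightarrow> bool) \<Rightarrow> real" where
  "LP V E = Inf {(\<Sum>v\<in>V. x v) | x. lp_feasible V E x}"

end

theory Submission
  imports Defs
begin

text \<open>If a graph has surplus at least 0, every feasible fractional vertex cover x has weight at
least |V|/2: for each level t > 0 the vertices with x v \<le> 1/2 - t form an independent set whose
neighbours all satisfy x v \<ge> 1/2 + t, so the deviations x v - 1/2 sum to a nonnegative number.
The all-1/2 vector attains this bound, hence LP = |V|/2. Deleting s vertices from a graph of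
surplus at least s leaves a graph of surplus at least 0, and both optima can be read off.\<close>

lemma sum_nonneg_if_card_levels_le:
  fixes y :: "'a \<Rightarrow> real"
  assumes "finite V"
    and "\<And>t. t > 0 \<Longrightarrow> card {v\<in>V. y v \<le> -t} \<le> card {v\<in>V. y v \<ge> t}"
  shows "0 \<le> sum y V"
  using assms
proof (induction "card V" arbitrary: V rule: less_induct)
  case less
  show ?case
  proof (cases "\<forall>v\<in>V. 0 \<le> y v")
    case True
    then show ?thesis by (simp add: sum_nonneg)
  next
    case False
    then have "V \<noteq> {}" by auto
    have "Min (y ` V) \<in> y ` V" using less.prems(1) \<open>V \<noteq> {}\<close> by simp
    then obtain w where "w \<in> V" "y w = Min (y ` V)" by auto
    then have w: "w \<in> V" "\<And>v. v \<in> V \<Longrightarrow> y w \<le> y v" using less.prems(1) by auto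
    define b where "b = - y w"
    have b: "b > 0" using False w(2) unfolding b_def by force
    \<comment> \<open>Removing a minimiser w and a maximiser u keeps the level condition and the sign of
      the sum, since the condition at level -y w forces y u \<ge> -y w.\<close>
    have "Max (y ` V) \<in> y ` V" using less.prems(1) \<open>V \<noteq> {}\<close> by simp
    then obtain u where "u \<in> V" "y u = Max (y ` V)" by auto
    then have u: "u \<in> V" "\<And>v. v \<in> V \<Longrightarrow> y v \<le> y u" using less.prems(1) by auto
    have "0 < card {v\<in>V. y v \<le> -b}"
      using w(1) less.prems(1) unfolding b_def by (auto simp: card_gt_0_iff)
    then have "{v\<in>V. y v \<ge> b} \<noteq> {}" using less.prems(2)[OF b] by (intro notI) simp
    then have yu: "y u \<ge> b" using u(2) by force
    define V' where "V' = V - {u, w}"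
    have uw: "{u, w} \<subseteq> V" "u \<noteq> w" using u(1) w(1) yu b unfolding b_def by auto
    have "0 \<le> sum y V'"
    proof (rule less.hyps)
      show "finite V'" using less.prems(1) unfolding V'_def by simp
      show "card V' < card V" using uw less.prems(1) unfolding V'_def by (intro psubset_card_mono) auto
    next
      fix t :: real assume t: "t > 0"
      show "card {v\<in>V'. y v \<le> -t} \<le> card {v\<in>V'. y v \<ge> t}"
      proof (cases "t \<le> b")
        case True
        have "{v\<in>V'. y v \<le> -t} = {v\<in>V. y v \<le> -t} - {w}"
          "{v\<in>V'. y v \<ge> t} = {v\<in>V. y v \<ge> t} - {u}"
          using True t yu b uw unfolding V'_def b_def by auto
        moreover have "w \<in> {v\<in>V. y v \<le> -t}" "u \<in> {v\<in>V. y v \<ge> t}"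
          using True yu uw unfolding b_def by auto
        ultimately show ?thesis
          using less.prems(1) less.prems(2)[OF t] by (simp add: card_Diff_singleton diff_le_mono)
      next
        case False
        then have "{v\<in>V'. y v \<le> -t} = {}" using w(2) unfolding V'_def b_def by force
        then show ?thesis by (simp only: card.empty)
      qed
    qed
    moreover have "sum y V = sum y V' + (y u + y w)"
      using sum.subset_diff[OF uw(1) less.prems(1)] uw(2) unfolding V'_def by simp
    ultimately show ?thesis using yu unfolding b_def by linarith
  qed
qed

lemma card_low_level_le_card_high_level:
  assumes "finite V" and feasible: "lp_feasible V E x" and "t > 0"
    and hall: "\<And>X. X \<noteq> {} \<Longrightarrow> independent V E X \<Longrightarrow> card X \<le> card (nbhd V E X)"
  shows "card {v\<in>V. x v \<le> 1/2 - t} \<le> card {v\<in>V. x v \<ge> 1/2 + t}"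
proof (cases "{v\<in>V. x v \<le> 1/2 - t} = {}")
  case False
  let ?L = "{v\<in>V. x v \<le> 1/2 - t}"
  have "independent V E ?L"
    using feasible \<open>t > 0\<close> unfolding independent_def lp_feasible_def by fastforce
  moreover have "nbhd V E ?L \<subseteq> {v\<in>V. x v \<ge> 1/2 + t}"
    using feasible unfolding nbhd_def lp_feasible_def by fastforce
  ultimately show ?thesis
    using hall[OF False] card_mono[OF _ \<open>nbhd V E ?L \<subseteq> _\<close>] \<open>finite V\<close> by fastforce
qed (simp only: card.empty le0)

lemma half_card_le_sum_if_lp_feasible:
  assumes "finite V" and "lp_feasible V E x"
    and "\<And>X. X \<noteq> {} \<Longrightarrow> independent V E X \<Longrightarrow> card X \<le> card (nbhd V E X)"
  shows "real (card V) / 2 \<le> (\<Sum>v\<in>V. x v)"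
proof -
  have "0 \<le> (\<Sum>v\<in>V. x v - 1/2)"
  proof (rule sum_nonneg_if_card_levels_le[OF \<open>finite V\<close>])
    fix t :: real assume "t > 0"
    from card_low_level_le_card_high_level[OF assms(1,2) this assms(3)]
    show "card {v\<in>V. x v - 1/2 \<le> -t} \<le> card {v\<in>V. x v - 1/2 \<ge> t}"
      by (simp add: algebra_simps)
  qed
  then show ?thesis by (simp add: sum_subtractf)
qed

lemma LP_eq_half_card:
  assumes "finite V"
    and "\<And>X. X \<noteq> {} \<Longrightarrow> independent V E X \<Longrightarrow> card X \<le> card (nbhd V E X)"
  shows "LP V E = real (card V) / 2"
  unfolding LP_def
proof (rule cInf_eq_minimum)
  have "lp_feasible V E (\<lambda>_. 1/2)" unfolding lp_feasible_def by auto
  then show "real (card V) / 2 \<in> {(\<Sum>v\<in>V. x v) | x. lp_feasible V E x}" by force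
next
  fix z assume "z \<in> {(\<Sum>v\<in>V. x v) | x. lp_feasible V E x}"
  then show "real (card V) / 2 \<le> z" using half_card_le_sum_if_lp_feasible[OF assms(1) _ assms(2)] by blast
qed

lemma surplus_le_surplus_set:
  assumes "finite V" and "X \<noteq> {}" and "independent V E X"
  shows "surplus V E \<le> surplus_set V E X"
proof -
  have "{surplus_set V E X | X. X \<noteq> {} \<and> independent V E X} \<subseteq> surplus_set V E ` Pow V"
    unfolding independent_def by auto
  then have "finite {surplus_set V E X | X. X \<noteq> {} \<and> independent V E X}"
    using \<open>finite V\<close> by (meson finite_Pow_iff finite_imageI finite_subset)
  then show ?thesis unfolding surplus_def using assms(2,3) by (intro Min_le) auto
qed

lemma card_le_card_nbhd_delete:
  assumes "finite V" and "S \<subseteq> V"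
    and surplus: "\<And>X. X \<noteq> {} \<Longrightarrow> independent V E X \<Longrightarrow> card X + card S \<le> card (nbhd V E X)"
    and "X \<noteq> {}" and X: "independent (V - S) (induced E (V - S)) X"
  shows "card X \<le> card (nbhd (V - S) (induced E (V - S)) X)"
proof -
  have "independent V E X" using X unfolding independent_def induced_def by blast
  then have "card X + card S \<le> card (nbhd V E X)" using surplus \<open>X \<noteq> {}\<close> by blast
  also have "\<dots> \<le> card (nbhd V E X - S) + card S"
    using diff_card_le_card_Diff[of S "nbhd V E X"] \<open>finite V\<close> \<open>S \<subseteq> V\<close> finite_subset by fastforce
  also have "card (nbhd V E X - S) \<le> card (nbhd (V - S) (induced E (V - S)) X)"
    using X \<open>finite V\<close> unfolding nbhd_def induced_def independent_def by (intro card_mono) auto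
  finally show ?thesis by simp
qed

theorem lemma3:
  fixes V :: "'a set" and E :: "'a \<Rightarrow> 'a \<Rightarrow> bool" and s :: nat and S :: "'a set"
  assumes "graph V E"
    and "surplus V E \<ge> int s"
    and "S \<subseteq> V" and "card S = s"
  shows "LP (V - S) (induced E (V - S)) = LP V E - real s / 2"
proof -
  have fin: "finite V" using assms(1) unfolding graph_def by auto
  have surplus: "card X + card S \<le> card (nbhd V E X)" if "X \<noteq> {}" "independent V E X" for X
    using surplus_le_surplus_set[OF fin that] assms(2,4) unfolding surplus_set_def by linarith
  have "LP V E = real (card V) / 2"
  proof (rule LP_eq_half_card[OF fin])
    fix X assume "X \<noteq> {}" "independent V E X"
    from surplus[OF this] show "card X \<le> card (nbhd V E X)" by simp
  qed
  moreover have "LP (V - S) (induced E (V - S)) = real (card (V - S)) / 2"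
    using fin by (intro LP_eq_half_card card_le_card_nbhd_delete[OF fin assms(3) surplus]) simp_all
  moreover have "card (V - S) + s = card V"
    using card_Diff_subset[OF finite_subset[OF assms(3) fin] assms(3)] card_mono[OF fin assms(3)] assms(4)
    by simp
  ultimately show ?thesis by (simp flip: of_nat_add)
qed

end
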